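(* During the execution of DASH (described in the context) on an initially connected graph, for any node $v$, the quantity $\mathrm{rem}(v)$ does not decrease over any round (a node deletion followed by DASH's healing) in which $v$ is not the deleted node.
   Context: Model: a network is an undirected graph, initially a connected graph $G_0$ on $n$ nodes. In each round an adversary deletes one surviving node $v$ with its incident edges, and then DASH adds edges. $G$ is the current network; $E'$ is the set of healing edges added so far whose endpoints both survive; $G'=(V(G),E')$. $N(u,G)$, $N(u,G')$ are neighbor sets in $G$, $G'$; $\delta(u)=\deg_G(u)-\deg_{G_0}(u)$. DASH: initially every node receives an ID drawn independently and uniformly from $[0,1]$ (its initial ID). When $v$ is deleted (quantities evaluated just before the deletion): partition the nodes of $N(v,G)$ whose current ID differs from that of $v$ into classes of equal current ID; $UN(v,G)$ consists of one node per class, the one with lowest initial ID. Let $S=UN(v,G)\cup N(v,G')$. Order $S$ by increasing $\delta$ and place it in this order into a complete binary tree with $|S|$ positions, filled level by level from the top and left to right; add to the network and to $E'$ the edge between each node of $S$ and the node at its parent position. Then all nodes of the component of $G'$ containing $S$ set their ID to the minimum current ID in $S$. Weights: every node $u$ has weight $w(u)$, initially $1$; when a node $v$ is deleted, $w(v)$ is added to the weight of an arbitrarily chosen node of $N(v,G')$. For a subgraph $H$, $W(H)$ is the sum of the weights of its vertices. For distinct surviving nodes $x,y$, $T(x,y)$ is the connected component of $G'-y$ containing $x$. Define $\mathrm{rem}(v)=\sum_{u\in N(v,G')}W(T(u,v))-\max_{u\in N(v,G')}W(T(u,v))+w(v)$ (the maximum over the empty set being $0$). *)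

theory Defs
  imports Complex_Main
begin

(* Undirected simple graphs: edges are 2-element sets {a,b}. *)

record 'a dstate =
  sV  :: "'a set"          (* surviving nodes V(G) *)
  sE  :: "'a set set"      (* edges of the current network G *)
  sH  :: "'a set set"      (* healing edges E' (both endpoints surviving) *)
  sid :: "'a \<Rightarrow> real"
  sw  :: "'a \<Rightarrow> nat"

definition nbrs :: "'a set set \<Rightarrow> 'a \<Rightarrow> 'a set" where
  "nbrs F u = {y. {u, y} \<in> F \<and> y \<noteq> u}"

definition deg :: "'a set set \<Rightarrow> 'a \<Rightarrow> nat" where
  "deg F u = card (nbrs F u)"

definition edge_rel :: "'a set set \<Rightarrow> ('a \<times> 'a) set" where
  "edge_rel F = {(a, b). {a, b} \<in> F}"

definition simple_graph :: "'a set \<Rightarrow> 'a set set \<Rightarrow> bool" where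
  "simple_graph V E \<longleftrightarrow> (\<forall>e\<in>E. \<exists>a b. a \<noteq> b \<and> a \<in> V \<and> b \<in> V \<and> e = {a, b})"

definition connected_graph :: "'a set \<Rightarrow> 'a set set \<Rightarrow> bool" where
  "connected_graph V E \<longleftrightarrow> V \<noteq> {} \<and> (\<forall>a\<in>V. \<forall>b\<in>V. (a, b) \<in> (edge_rel E)\<^sup>*)"

definition delta :: "'a set set \<Rightarrow> 'a dstate \<Rightarrow> 'a \<Rightarrow> int" where
  "delta E0 s u = int (deg (sE s) u) - int (deg E0 u)"

(* Un_rep(x,G): one node per class of equal current ID among the G-neighbours of x whose
   current ID differs from that of x, namely one with lowest initial ID. *)
definition is_UN :: "('a \<Rightarrow> real) \<Rightarrow> 'a dstate \<Rightarrow> 'a \<Rightarrow> 'a set \<Rightarrow> bool" where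
  "is_UN iid s x Un_rep \<longleftrightarrow>
     Un_rep \<subseteq> nbrs (sE s) x \<and>
     (\<forall>u\<in>Un_rep. sid s u \<noteq> sid s x) \<and>
     (\<forall>u\<in>nbrs (sE s) x. sid s u \<noteq> sid s x \<longrightarrow> (\<exists>!r. r \<in> Un_rep \<and> sid s r = sid s u)) \<and>
     (\<forall>r\<in>Un_rep. \<forall>u\<in>nbrs (sE s) x. sid s u = sid s r \<longrightarrow> iid r \<le> iid u)"

(* Complete binary tree on the list L (positions filled level by level, left to right):
   the node at 0-based position i > 0 is joined to the node at its parent position (i-1) div 2. *)
definition tree_edges :: "'a list \<Rightarrow> 'a set set" where
  "tree_edges L = {{L ! i, L ! ((i - 1) div 2)} | i. 0 < i \<and> i < length L}"

(* One round: the adversary deletes x, then DASH heals. r is the arbitrarily chosen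
   recipient of w(x) among N(x,G') (if that set is nonempty). *)
definition dash_step :: "'a set set \<Rightarrow> ('a \<Rightarrow> real) \<Rightarrow> 'a dstate \<Rightarrow> 'a \<Rightarrow> 'a dstate \<Rightarrow> bool" where
  "dash_step E0 iid s x s' \<longleftrightarrow> x \<in> sV s \<and>
     (\<exists>Un_rep L r.
        is_UN iid s x Un_rep \<and>
        distinct L \<and> set L = Un_rep \<union> nbrs (sH s) x \<and>
        sorted (map (delta E0 s) L) \<and>
        (nbrs (sH s) x \<noteq> {} \<longrightarrow> r \<in> nbrs (sH s) x) \<and>
        (let S = set L;
             H' = {e \<in> sH s. x \<notin> e} \<union> tree_edges L
         in s' = \<lparr> sV = sV s - {x},
                   sE = {e \<in> sE s. x \<notin> e} \<union> tree_edges L,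
                   sH = H',
                   sid = (\<lambda>u. if (\<exists>a\<in>S. (a, u) \<in> (edge_rel H')\<^sup>*)
                              then Min (sid s ` S) else sid s u),
                   sw = (if nbrs (sH s) x = {} then sw s
                         else (sw s)(r := sw s r + sw s x)) \<rparr>))"

definition dash_round :: "'a set set \<Rightarrow> ('a \<Rightarrow> real) \<Rightarrow> 'a dstate \<Rightarrow> 'a dstate \<Rightarrow> bool" where
  "dash_round E0 iid s s' \<longleftrightarrow> (\<exists>x. dash_step E0 iid s x s')"

definition init_state :: "'a set \<Rightarrow> 'a set set \<Rightarrow> ('a \<Rightarrow> real) \<Rightarrow> 'a dstate" where
  "init_state V0 E0 iid = \<lparr> sV = V0, sE = E0, sH = {}, sid = iid, sw = (\<lambda>_. 1) \<rparr>"

(* T(u,v): vertex set of the component of G' - v containing u *)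
definition T_comp :: "'a dstate \<Rightarrow> 'a \<Rightarrow> 'a \<Rightarrow> 'a set" where
  "T_comp s u v = {y. (u, y) \<in> {(a, b). {a, b} \<in> sH s \<and> a \<noteq> v \<and> b \<noteq> v}\<^sup>*}"

definition Wt :: "'a dstate \<Rightarrow> 'a set \<Rightarrow> nat" where
  "Wt s A = (\<Sum>y\<in>A. sw s y)"

definition rem :: "'a dstate \<Rightarrow> 'a \<Rightarrow> nat" where
  "rem s v = (\<Sum>u\<in>nbrs (sH s) v. Wt s (T_comp s u v))
             - Max (insert 0 ((\<lambda>u. Wt s (T_comp s u v)) ` nbrs (sH s) v))
             + sw s v"

end

theory Submission
  imports Defs
begin

text \<open>The healing edges always form a forest on which the current IDs are constant. Indeed,
  the nodes of \<open>UN(x, G)\<close> lie in components of \<open>G'\<close> with pairwise distinct IDs, all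
  different from the ID of \<open>x\<close>, so after deleting \<open>x\<close> the nodes of \<open>S\<close> lie in distinct
  components and the binary tree on \<open>S\<close> merges them without creating a cycle.

  Now let \<open>v \<noteq> x\<close>. The branches \<open>T(u, v)\<close> at \<open>v\<close> that avoid \<open>x\<close> survive the round and do not
  lose weight, and since \<open>G'\<close> is a forest at most one branch at \<open>v\<close> contains \<open>x\<close>. The weight of
  that branch, including \<open>w(x)\<close>, is recovered: if \<open>x\<close> is the neighbour of \<open>v\<close>, then \<open>v\<close> lies in
  \<open>S\<close> and the branch is redistributed over \<open>v\<close> and the new branches hanging off \<open>v\<close> in the
  tree; otherwise \<open>v \<notin> S\<close> and the tree reconnects the branch without \<open>x\<close>, while \<open>w(x)\<close> goes
  to a node of that branch. As \<open>rem(v)\<close> is the total branch weight minus the heaviest branch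
  plus \<open>w(v)\<close>, it cannot decrease.\<close>

section \<open>Reachability in edge sets\<close>

definition induced_edge_rel :: "'a set set \<Rightarrow> ('a \<Rightarrow> bool) \<Rightarrow> ('a \<times> 'a) set" where
  "induced_edge_rel E P = {(a, b). {a, b} \<in> E \<and> P a \<and> P b}"

lemma edge_rel_eq_induced_edge_rel: "edge_rel E = induced_edge_rel E (\<lambda>_. True)"
  by (simp add: edge_rel_def induced_edge_rel_def)

lemma sym_induced_edge_rel: "sym (induced_edge_rel E P)"
  by (auto simp: sym_def induced_edge_rel_def insert_commute)

lemma induced_edge_rel_rtrancl_sym:
  "(a, b) \<in> (induced_edge_rel E P)\<^sup>* \<Longrightarrow> (b, a) \<in> (induced_edge_rel E P)\<^sup>*"
  using sym_rtrancl[OF sym_induced_edge_rel] by (rule symD)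

lemma edge_rel_rtrancl_sym: "(a, b) \<in> (edge_rel E)\<^sup>* \<Longrightarrow> (b, a) \<in> (edge_rel E)\<^sup>*"
  unfolding edge_rel_eq_induced_edge_rel by (rule induced_edge_rel_rtrancl_sym)

lemma induced_edge_rel_rtrancl_mono:
  assumes "(a, b) \<in> (induced_edge_rel E P)\<^sup>*" "E \<subseteq> E'" "\<And>y. P y \<Longrightarrow> P' y"
  shows "(a, b) \<in> (induced_edge_rel E' P')\<^sup>*"
proof -
  have "induced_edge_rel E P \<subseteq> induced_edge_rel E' P'"
    using assms(2,3) by (auto simp: induced_edge_rel_def)
  with assms(1) show ?thesis by (metis rtrancl_mono subsetD)
qed

lemma edge_rel_rtrancl_mono: "(a, b) \<in> (edge_rel E)\<^sup>* \<Longrightarrow> E \<subseteq> E' \<Longrightarrow> (a, b) \<in> (edge_rel E')\<^sup>*"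
  unfolding edge_rel_eq_induced_edge_rel by (rule induced_edge_rel_rtrancl_mono)

lemma edge_rel_rtrancl_snoc:
  "(a, b) \<in> (edge_rel E)\<^sup>* \<Longrightarrow> {b, c} \<in> E \<Longrightarrow> (a, c) \<in> (edge_rel E)\<^sup>*"
  by (rule rtrancl_into_rtrancl) (auto simp: edge_rel_def)

lemma edge_rel_remove_vertex: "edge_rel {e \<in> E. x \<notin> e} = induced_edge_rel E (\<lambda>a. a \<noteq> x)"
  by (auto simp: edge_rel_def induced_edge_rel_def)

lemma induced_edge_rel_rtrancl_target: "(a, b) \<in> (induced_edge_rel E P)\<^sup>* \<Longrightarrow> b = a \<or> P b"
  by (induction rule: rtrancl_induct) (auto simp: induced_edge_rel_def)

lemma induced_edge_rel_rtrancl_subset: "(a, b) \<in> (induced_edge_rel E P)\<^sup>* \<Longrightarrow> b = a \<or> b \<in> \<Union>E"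
  by (induction rule: rtrancl_induct) (auto simp: induced_edge_rel_def)

lemma finite_induced_reachable:
  assumes "finite E" "\<forall>e\<in>E. finite e"
  shows "finite {b. (a, b) \<in> (induced_edge_rel E P)\<^sup>*}"
proof (rule finite_subset)
  show "{b. (a, b) \<in> (induced_edge_rel E P)\<^sup>*} \<subseteq> insert a (\<Union>E)"
    using induced_edge_rel_rtrancl_subset by fastforce
qed (use assms in auto)

lemma induced_edge_rel_rtrancl_const:
  assumes "\<forall>a b. {a, b} \<in> E \<longrightarrow> f a = f b" "(a, b) \<in> (induced_edge_rel E P)\<^sup>*"
  shows "f a = f b"
  using assms(2) by (induction rule: rtrancl_induct) (use assms(1) in \<open>auto simp: induced_edge_rel_def\<close>)

lemma induced_edge_rel_rtrancl_avoid:
  assumes "(a, b) \<in> (induced_edge_rel E P)\<^sup>*" "(a, x) \<notin> (induced_edge_rel E P)\<^sup>*"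
  shows "(a, b) \<in> (induced_edge_rel {e\<in>E. x \<notin> e} P)\<^sup>*"
  using assms(1)
proof (induction rule: rtrancl_induct)
  case (step b c)
  then have "x \<notin> {b, c}"
    using assms(2) rtrancl_into_rtrancl[OF step(1,2)] by auto
  with step(2) have "(b, c) \<in> induced_edge_rel {e\<in>E. x \<notin> e} P"
    by (simp add: induced_edge_rel_def)
  with step(3) show ?case ..
qed simp

lemma induced_edge_rel_first_entry:
  assumes "(a, c) \<in> (induced_edge_rel E P)\<^sup>*" "a \<noteq> t"
  shows "(a, c) \<in> (induced_edge_rel E (\<lambda>y. P y \<and> y \<noteq> t))\<^sup>* \<or>
         (\<exists>k. {k, t} \<in> E \<and> P k \<and> k \<noteq> t \<and> (a, k) \<in> (induced_edge_rel E (\<lambda>y. P y \<and> y \<noteq> t))\<^sup>*)"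
  using assms(1)
proof (induction rule: rtrancl_induct)
  case (step b c)
  let ?R = "induced_edge_rel E (\<lambda>y. P y \<and> y \<noteq> t)"
  show ?case
  proof (cases "(a, b) \<in> ?R\<^sup>*")
    case True
    then have "b \<noteq> t"
      using induced_edge_rel_rtrancl_target assms(2) by fastforce
    moreover have "{b, c} \<in> E" "P b" "P c"
      using step(2) by (auto simp: induced_edge_rel_def)
    ultimately show ?thesis
    proof (cases "c = t")
      case False
      with \<open>b \<noteq> t\<close> \<open>{b, c} \<in> E\<close> \<open>P b\<close> \<open>P c\<close> have "(b, c) \<in> ?R"
        by (simp add: induced_edge_rel_def)
      with True show ?thesis by (meson rtrancl_into_rtrancl)
    next
      case True
      with \<open>(a, b) \<in> ?R\<^sup>*\<close> \<open>b \<noteq> t\<close> \<open>{b, c} \<in> E\<close> \<open>P b\<close> show ?thesis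
        by (intro disjI2 exI[of _ b]) simp
    qed
  next
    case False
    with step(3) show ?thesis by (elim disjE) simp_all
  qed
qed simp

lemma induced_edge_rel_last_edge:
  assumes "(a, t) \<in> (induced_edge_rel E P)\<^sup>*" "a \<noteq> t"
  obtains k where "{k, t} \<in> E" "P k" "k \<noteq> t" "(a, k) \<in> (induced_edge_rel E (\<lambda>y. P y \<and> y \<noteq> t))\<^sup>*"
proof -
  have "(a, t) \<notin> (induced_edge_rel E (\<lambda>y. P y \<and> y \<noteq> t))\<^sup>*"
    using induced_edge_rel_rtrancl_target assms(2) by fastforce
  with induced_edge_rel_first_entry[OF assms] that show thesis by blast
qed

lemma nbrs_iff: "y \<in> nbrs F u \<longleftrightarrow> {u, y} \<in> F \<and> y \<noteq> u"
  by (simp add: nbrs_def)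

lemma T_comp_eq: "T_comp s u v = {y. (u, y) \<in> (induced_edge_rel (sH s) (\<lambda>a. a \<noteq> v))\<^sup>*}"
  by (simp add: T_comp_def induced_edge_rel_def)

section \<open>Forests and healing trees\<close>

definition forest :: "'a set set \<Rightarrow> bool" where
  "forest H \<longleftrightarrow> (\<forall>a b. {a, b} \<in> H \<longrightarrow> (a, b) \<notin> (edge_rel (H - {{a, b}}))\<^sup>*)"

lemma forest_edge_neq: "forest H \<Longrightarrow> {a, b} \<in> H \<Longrightarrow> a \<noteq> b"
  unfolding forest_def by (metis rtrancl.rtrancl_refl)

lemma forest_subset:
  assumes "forest H" "H' \<subseteq> H"
  shows "forest H'"
  unfolding forest_def
proof (intro allI impI notI)
  fix a b
  assume "{a, b} \<in> H'" and path: "(a, b) \<in> (edge_rel (H' - {{a, b}}))\<^sup>*"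
  have "H' - {{a, b}} \<subseteq> H - {{a, b}}" using assms(2) by blast
  with path have "(a, b) \<in> (edge_rel (H - {{a, b}}))\<^sup>*" by (rule edge_rel_rtrancl_mono)
  moreover have "{a, b} \<in> H" using \<open>{a, b} \<in> H'\<close> assms(2) by blast
  ultimately show False
    using assms(1) unfolding forest_def by blast
qed

lemma forest_nbrs_disconnected:
  assumes "forest H" "{v, u1} \<in> H" "{v, u2} \<in> H" "(u1, u2) \<in> (induced_edge_rel H (\<lambda>a. a \<noteq> v))\<^sup>*"
  shows "u1 = u2"
proof (rule ccontr)
  assume "u1 \<noteq> u2"
  let ?H = "H - {{v, u1}}"
  have "induced_edge_rel H (\<lambda>a. a \<noteq> v) \<subseteq> edge_rel ?H"
  proof (clarify)
    fix a b assume "(a, b) \<in> induced_edge_rel H (\<lambda>a. a \<noteq> v)"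
    then have "{a, b} \<in> H" "v \<notin> {a, b}" by (auto simp: induced_edge_rel_def)
    then show "(a, b) \<in> edge_rel ?H" unfolding edge_rel_def by blast
  qed
  then have "(u2, u1) \<in> (edge_rel ?H)\<^sup>*"
    using induced_edge_rel_rtrancl_sym[OF assms(4)] rtrancl_mono by blast
  moreover have "(v, u2) \<in> edge_rel ?H"
    using assms(3) \<open>u1 \<noteq> u2\<close> by (simp add: edge_rel_def doubleton_eq_iff)
  ultimately have "(v, u1) \<in> (edge_rel ?H)\<^sup>*"
    by (rule converse_rtrancl_into_rtrancl[rotated])
  with assms(1,2) show False
    unfolding forest_def by simp
qed

lemma tree_edgesE:
  assumes "e \<in> tree_edges L"
  obtains i where "0 < i" "i < length L" "e = {L ! i, L ! ((i - 1) div 2)}"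
  using assms by (auto simp: tree_edges_def)

lemma tree_edgesI: "0 < i \<Longrightarrow> i < length L \<Longrightarrow> {L ! i, L ! ((i - 1) div 2)} \<in> tree_edges L"
  by (auto simp: tree_edges_def)

lemma finite_tree_edges: "finite (tree_edges L)"
proof -
  have "tree_edges L = (\<lambda>i. {L ! i, L ! ((i - 1) div 2)}) ` {i. 0 < i \<and> i < length L}"
    by (auto simp: tree_edges_def)
  then show ?thesis by simp
qed

lemma tree_edges_finite_edge: "e \<in> tree_edges L \<Longrightarrow> finite e"
  by (auto elim: tree_edgesE)

lemma tree_edges_in_set: "{a, b} \<in> tree_edges L \<Longrightarrow> a \<in> set L \<and> b \<in> set L"
  by (elim tree_edgesE) (auto simp: doubleton_eq_iff)

lemma tree_edges_connected_root: "i < length L \<Longrightarrow> (L ! 0, L ! i) \<in> (edge_rel (tree_edges L))\<^sup>*"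
proof (induction i rule: less_induct)
  case (less i)
  show ?case
  proof (cases "i = 0")
    case False
    then have "(L ! 0, L ! ((i - 1) div 2)) \<in> (edge_rel (tree_edges L))\<^sup>*"
      using less by simp
    moreover have "{L ! ((i - 1) div 2), L ! i} \<in> tree_edges L"
      using tree_edgesI[of i L] False less(2) by (simp add: insert_commute)
    ultimately show ?thesis by (rule edge_rel_rtrancl_snoc)
  qed simp
qed

lemma tree_edges_connected:
  assumes "a \<in> set L" "b \<in> set L"
  shows "(a, b) \<in> (edge_rel (tree_edges L))\<^sup>*"
proof -
  obtain i j where "i < length L" "j < length L" "a = L ! i" "b = L ! j"
    using assms by (metis in_set_conv_nth)
  then show ?thesis
    using tree_edges_connected_root[of i L] tree_edges_connected_root[of j L]
    by (blast intro: rtrancl_trans edge_rel_rtrancl_sym)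
qed

definition in_distinct_components :: "'a set set \<Rightarrow> 'a set \<Rightarrow> bool" where
  "in_distinct_components G A \<longleftrightarrow> (\<forall>p\<in>A. \<forall>q\<in>A. (p, q) \<in> (edge_rel G)\<^sup>* \<longrightarrow> p = q)"

definition heap_subtree :: "nat \<Rightarrow> nat set" where
  "heap_subtree i = {j. \<exists>n. ((\<lambda>k. (k - 1) div 2) ^^ n) j = i}"

lemma self_in_heap_subtree: "i \<in> heap_subtree i"
  unfolding heap_subtree_def by (metis (mono_tags) funpow_0 mem_Collect_eq)

lemma heap_subtree_parent_iff:
  assumes "0 < m" "m \<noteq> i"
  shows "(m - 1) div 2 \<in> heap_subtree i \<longleftrightarrow> m \<in> heap_subtree i"
proof
  let ?f = "\<lambda>k::nat. (k - 1) div 2"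
  assume "?f m \<in> heap_subtree i"
  then obtain n where "(?f ^^ n) (?f m) = i" unfolding heap_subtree_def by blast
  then have "(?f ^^ Suc n) m = i" by (simp add: funpow_Suc_right del: funpow.simps)
  then show "m \<in> heap_subtree i" unfolding heap_subtree_def by blast
next
  let ?f = "\<lambda>k::nat. (k - 1) div 2"
  assume "m \<in> heap_subtree i"
  then obtain n where n: "(?f ^^ n) m = i" unfolding heap_subtree_def by blast
  with assms(2) obtain n' where "n = Suc n'" by (cases n) auto
  with n have "(?f ^^ n') (?f m) = i" by (simp add: funpow_Suc_right del: funpow.simps)
  then show "?f m \<in> heap_subtree i" unfolding heap_subtree_def by blast
qed

lemma parent_notin_heap_subtree:
  assumes "0 < i"
  shows "(i - 1) div 2 \<notin> heap_subtree i"
proof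
  let ?f = "\<lambda>k::nat. (k - 1) div 2"
  have le: "(?f ^^ n) k \<le> k" for n k
    by (induction n) (simp_all add: le_trans[OF div_le_dividend])
  assume "?f i \<in> heap_subtree i"
  then obtain n where "(?f ^^ n) (?f i) = i" unfolding heap_subtree_def by blast
  with le[of n "?f i"] assms show False by simp
qed

text \<open>A path avoiding the tree edge between position \<open>i\<close> and its parent cannot leave the
  \<open>G\<close>-components of the positions in the subtree of \<open>i\<close>.\<close>

lemma tree_edge_cut:
  assumes "distinct L" "0 < i" "i < length L" "in_distinct_components G (set L)"
  shows "(L ! i, L ! ((i - 1) div 2)) \<notin> (edge_rel (G \<union> (tree_edges L - {{L ! i, L ! ((i - 1) div 2)}})))\<^sup>*"
proof
  let ?F = "G \<union> (tree_edges L - {{L ! i, L ! ((i - 1) div 2)}})"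
  define Z where "Z = {y. \<exists>j\<in>heap_subtree i. j < length L \<and> (L ! j, y) \<in> (edge_rel G)\<^sup>*}"
  have sep: "j = k" if "j < length L" "k < length L" "(L ! j, L ! k) \<in> (edge_rel G)\<^sup>*" for j k
  proof -
    have "L ! j = L ! k"
      using assms(4) that(3) nth_mem[OF that(1)] nth_mem[OF that(2)]
      unfolding in_distinct_components_def by blast
    with assms(1) that(1,2) show ?thesis by (simp add: nth_eq_iff_index_eq)
  qed
  have in_Z: "L ! j \<in> Z" if "j \<in> heap_subtree i" "j < length L" for j
    unfolding Z_def using that by blast
  have "edge_rel ?F `` Z \<subseteq> Z"
  proof
    fix y' assume "y' \<in> edge_rel ?F `` Z"
    then obtain y j where edge: "{y, y'} \<in> ?F" and j: "j \<in> heap_subtree i" "j < length L"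
      "(L ! j, y) \<in> (edge_rel G)\<^sup>*"
      unfolding Z_def edge_rel_def by blast
    show "y' \<in> Z"
    proof (cases "{y, y'} \<in> G")
      case True
      with j show ?thesis unfolding Z_def by (blast intro: edge_rel_rtrancl_snoc)
    next
      case False
      with edge have te: "{y, y'} \<in> tree_edges L" "{y, y'} \<noteq> {L ! i, L ! ((i - 1) div 2)}" by auto
      obtain m where m: "0 < m" "m < length L" "{y, y'} = {L ! m, L ! ((m - 1) div 2)}"
        by (rule tree_edgesE[OF te(1)])
      with te(2) have "m \<noteq> i" by auto
      note parent_iff = heap_subtree_parent_iff[OF m(1) this]
      have pm: "(m - 1) div 2 < length L" using m by simp
      from m(3) consider "y = L ! m" "y' = L ! ((m - 1) div 2)" | "y = L ! ((m - 1) div 2)" "y' = L ! m"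
        by (auto simp: doubleton_eq_iff)
      then show ?thesis
      proof cases
        case 1
        with j(3) have "j = m" using sep[OF j(2) m(2)] by simp
        with j(1) parent_iff pm in_Z 1 show ?thesis by simp
      next
        case 2
        with j(3) have "j = (m - 1) div 2" using sep[OF j(2) pm] by simp
        with j(1) parent_iff m(2) in_Z 2 show ?thesis by simp
      qed
    qed
  qed
  then have closed: "(edge_rel ?F)\<^sup>* `` Z = Z" by (rule Image_closed_trancl)
  have "L ! i \<in> Z" using self_in_heap_subtree assms(3) by (rule in_Z)
  moreover assume "(L ! i, L ! ((i - 1) div 2)) \<in> (edge_rel ?F)\<^sup>*"
  ultimately have "L ! ((i - 1) div 2) \<in> (edge_rel ?F)\<^sup>* `` Z" by (rule ImageI[rotated])
  with closed obtain j where j: "j \<in> heap_subtree i" "j < length L"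
    "(L ! j, L ! ((i - 1) div 2)) \<in> (edge_rel G)\<^sup>*"
    unfolding Z_def by blast
  have "(i - 1) div 2 < length L" using assms(3) by simp
  with j have "j = (i - 1) div 2" by (intro sep)
  with j(1) parent_notin_heap_subtree[OF assms(2)] show False by simp
qed

text \<open>Tree edges only join distinct \<open>G\<close>-components, so a path that leaves the
  \<open>(G - {e})\<close>-component of \<open>a\<close> can never return to the \<open>G\<close>-component of \<open>a\<close>.\<close>

lemma reach_Un_tree_edges_remove_edge:
  assumes "in_distinct_components G (set L)"
    and "(a, y) \<in> (edge_rel ((G - {e}) \<union> tree_edges L))\<^sup>*"
  shows "(a, y) \<in> (edge_rel (G - {e}))\<^sup>* \<or>
    ((a, y) \<notin> (edge_rel G)\<^sup>* \<and> (\<exists>c\<in>set L. (a, c) \<in> (edge_rel (G - {e}))\<^sup>*))"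
  using assms(2)
proof (induction rule: rtrancl_induct)
  case (step y y')
  have G_reach: "(a, z) \<in> (edge_rel G)\<^sup>*" if "(a, z) \<in> (edge_rel (G - {e}))\<^sup>*" for z
    using that by (rule edge_rel_rtrancl_mono) blast
  have sep: "p = q" if "p \<in> set L" "q \<in> set L" "(a, p) \<in> (edge_rel G)\<^sup>*" "(a, q) \<in> (edge_rel G)\<^sup>*" for p q
    using assms(1) that unfolding in_distinct_components_def
    by (meson edge_rel_rtrancl_sym rtrancl_trans)
  have "{y, y'} \<in> G - {e} \<or> {y, y'} \<in> tree_edges L"
    using step(2) by (simp add: edge_rel_def)
  then show ?case
  proof
    assume edge: "{y, y'} \<in> G - {e}"
    show ?thesis
    proof (cases "(a, y) \<in> (edge_rel (G - {e}))\<^sup>*")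
      case True
      with edge show ?thesis by (blast intro: edge_rel_rtrancl_snoc)
    next
      case False
      with step.IH have "(a, y) \<notin> (edge_rel G)\<^sup>*" "\<exists>c\<in>set L. (a, c) \<in> (edge_rel (G - {e}))\<^sup>*"
        by auto
      moreover have "(a, y') \<notin> (edge_rel G)\<^sup>*"
      proof
        assume "(a, y') \<in> (edge_rel G)\<^sup>*"
        moreover have "{y', y} \<in> G" using edge by (auto simp: insert_commute)
        ultimately have "(a, y) \<in> (edge_rel G)\<^sup>*" by (rule edge_rel_rtrancl_snoc)
        with \<open>(a, y) \<notin> (edge_rel G)\<^sup>*\<close> show False ..
      qed
      ultimately show ?thesis by blast
    qed
  next
    assume "{y, y'} \<in> tree_edges L"
    then have "y \<in> set L" "y' \<in> set L" by (auto dest: tree_edges_in_set)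
    from step.IH show ?thesis
    proof
      assume a_y: "(a, y) \<in> (edge_rel (G - {e}))\<^sup>*"
      show ?thesis
      proof (cases "(a, y') \<in> (edge_rel G)\<^sup>*")
        case True
        with a_y sep \<open>y \<in> set L\<close> \<open>y' \<in> set L\<close> G_reach have "y = y'" by blast
        with a_y show ?thesis by simp
      qed (use a_y \<open>y \<in> set L\<close> in blast)
    next
      assume "(a, y) \<notin> (edge_rel G)\<^sup>* \<and> (\<exists>c\<in>set L. (a, c) \<in> (edge_rel (G - {e}))\<^sup>*)"
      then obtain c where c: "c \<in> set L" "(a, c) \<in> (edge_rel (G - {e}))\<^sup>*" by blast
      show ?thesis
      proof (cases "(a, y') \<in> (edge_rel G)\<^sup>*")
        case True
        with c sep \<open>y' \<in> set L\<close> G_reach have "c = y'" by blast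
        with c show ?thesis by simp
      qed (use c in blast)
    qed
  qed
qed simp

lemma forest_Un_tree_edges:
  assumes "forest G" "distinct L" "in_distinct_components G (set L)"
  shows "forest (G \<union> tree_edges L)"
  unfolding forest_def
proof (intro allI impI notI)
  fix a b
  assume edge: "{a, b} \<in> G \<union> tree_edges L"
    and path: "(a, b) \<in> (edge_rel (G \<union> tree_edges L - {{a, b}}))\<^sup>*"
  show False
  proof (cases "{a, b} \<in> G")
    case True
    have "{a, b} \<notin> tree_edges L"
    proof
      assume "{a, b} \<in> tree_edges L"
      then have "a \<in> set L" "b \<in> set L" by (auto dest: tree_edges_in_set)
      moreover have "(a, b) \<in> (edge_rel G)\<^sup>*" using True by (auto simp: edge_rel_def)
      ultimately show False
        using assms(3) forest_edge_neq[OF assms(1) True] unfolding in_distinct_components_def by blast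
    qed
    then have "G \<union> tree_edges L - {{a, b}} = (G - {{a, b}}) \<union> tree_edges L" by blast
    with path have "(a, b) \<in> (edge_rel ((G - {{a, b}}) \<union> tree_edges L))\<^sup>*" by simp
    moreover have "(a, b) \<notin> (edge_rel (G - {{a, b}}))\<^sup>*"
      using assms(1) True unfolding forest_def by blast
    moreover have "(a, b) \<in> (edge_rel G)\<^sup>*" using True by (auto simp: edge_rel_def)
    ultimately show False
      using reach_Un_tree_edges_remove_edge[OF assms(3)] by blast
  next
    case False
    with edge have "{a, b} \<in> tree_edges L" by blast
    then obtain i where i: "0 < i" "i < length L" "{a, b} = {L ! i, L ! ((i - 1) div 2)}"
      by (rule tree_edgesE)
    let ?F = "G \<union> (tree_edges L - {{L ! i, L ! ((i - 1) div 2)}})"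
    have "G \<union> tree_edges L - {{a, b}} = ?F" using False i(3) by auto
    with path have "(a, b) \<in> (edge_rel ?F)\<^sup>*" by simp
    then have "(L ! i, L ! ((i - 1) div 2)) \<in> (edge_rel ?F)\<^sup>*"
      using i(3) edge_rel_rtrancl_sym by (auto simp: doubleton_eq_iff)
    with tree_edge_cut[OF assms(2) i(1,2) assms(3)] show False ..
  qed
qed

section \<open>Branch weights\<close>

lemma Wt_le_Wt:
  assumes "finite B" "A \<subseteq> B" "\<And>y. sw s y \<le> sw s' y"
  shows "Wt s A \<le> Wt s' B"
proof -
  have "Wt s A \<le> Wt s' A" unfolding Wt_def using assms(3) by (rule sum_mono)
  also have "\<dots> \<le> Wt s' B" unfolding Wt_def using assms(1,2) by (intro sum_mono2) auto
  finally show ?thesis .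
qed

lemma Wt_le_Wt_plus:
  assumes "finite B" "A \<subseteq> B" "\<And>y. sw s y \<le> sw s' y" "r \<in> A" "sw s' r = sw s r + c"
  shows "Wt s A + c \<le> Wt s' B"
proof -
  have "finite A" using assms(1,2) by (rule finite_subset[rotated])
  then have "Wt s A + c = sw s' r + Wt s (A - {r})"
    unfolding Wt_def using assms(4,5) by (simp add: sum.remove)
  also have "\<dots> \<le> sw s' r + Wt s' (B - {r})"
    using Wt_le_Wt[of "B - {r}" "A - {r}"] assms by auto
  also have "\<dots> = Wt s' B"
    unfolding Wt_def using assms(1,2,4) by (simp add: sum.remove[symmetric] subsetD)
  finally show ?thesis .
qed

lemma sum_UN_le:
  fixes f :: "'b \<Rightarrow> nat"
  assumes "finite K" "\<And>k. k \<in> K \<Longrightarrow> finite (T k)"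
  shows "sum f (\<Union>k\<in>K. T k) \<le> (\<Sum>k\<in>K. sum f (T k))"
  using assms
proof (induction K rule: finite_induct)
  case (insert k K)
  then have "sum f (\<Union>j\<in>insert k K. T j) \<le> sum f (T k) + sum f (\<Union>j\<in>K. T j)"
    using sum_Un_nat[of "T k" "\<Union>j\<in>K. T j" f] by simp
  also have "\<dots> \<le> (\<Sum>j\<in>insert k K. sum f (T j))"
    using insert by simp
  finally show ?case .
qed simp

lemma Max_insert_0_le_sum:
  fixes f :: "'b \<Rightarrow> nat"
  assumes "finite A"
  shows "Max (insert 0 (f ` A)) \<le> sum f A"
proof -
  have "Max (insert 0 (f ` A)) \<in> insert 0 (f ` A)" using assms by (intro Max_in) auto
  then show ?thesis using assms by (auto intro: member_le_sum)
qed

text \<open>The shape of \<open>rem\<close>: all branch weights but the heaviest, plus the weight of the node.\<close>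

lemma sum_minus_Max_mono:
  fixes a b :: "'b \<Rightarrow> nat" and w w' :: nat
  assumes fin: "finite N" "finite N'" and G: "G \<subseteq> N" "G \<subseteq> N'"
    and ab: "\<And>u. u \<in> G \<Longrightarrow> a u \<le> b u" and "w \<le> w'"
    and single: "\<And>u u'. u \<in> N - G \<Longrightarrow> u' \<in> N - G \<Longrightarrow> u = u'"
    and rest: "(\<Sum>u\<in>N - G. a u) + w \<le> (\<Sum>u\<in>N' - G. b u) + w'"
  shows "sum a N - Max (insert 0 (a ` N)) + w \<le> sum b N' - Max (insert 0 (b ` N')) + w'"
proof -
  define M M' where "M = Max (insert 0 (a ` N))" and "M' = Max (insert 0 (b ` N'))"
  have a_le_M: "a u \<le> M" if "u \<in> N" for u
    unfolding M_def using fin(1) that by (intro Max_ge) auto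
  have "finite G" using G(1) fin(1) by (rule finite_subset)
  have sum_a: "sum a N = sum a (N - G) + sum a G" using sum.subset_diff[OF G(1) fin(1)] .
  have sum_b: "sum b N' = sum b (N' - G) + sum b G" using sum.subset_diff[OF G(2) fin(2)] .
  have "sum a (N - G) \<le> M"
  proof (cases "N - G = {}")
    case False
    then obtain u0 where "u0 \<in> N - G" by blast
    with single have "N - G = {u0}" by blast
    moreover have "a u0 \<le> M" using \<open>u0 \<in> N - G\<close> by (blast intro: a_le_M)
    ultimately show ?thesis by simp
  qed (simp only: sum.empty)
  have sum_G: "sum a G \<le> sum b G" using ab by (rule sum_mono)
  have "M' \<in> insert 0 (b ` N')" unfolding M'_def using fin(2) by (intro Max_in) auto
  then have "sum a N + w + M' \<le> sum b N' + w' + M"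
  proof (elim insertE imageE)
    assume "M' = 0"
    with sum_a sum_b rest sum_G show ?thesis by linarith
  next
    fix k assume "M' = b k" "k \<in> N'"
    show ?thesis
    proof (cases "k \<in> G")
      case True
      have "sum a G = a k + sum a (G - {k})" "sum b G = b k + sum b (G - {k})"
        using sum.remove[OF \<open>finite G\<close> True] by simp_all
      moreover have "sum a (G - {k}) \<le> sum b (G - {k})" using ab by (intro sum_mono) blast
      moreover have "a k \<le> M" using a_le_M True G(1) by blast
      ultimately show ?thesis using sum_a sum_b rest \<open>M' = b k\<close> by linarith
    next
      case False
      with \<open>k \<in> N'\<close> fin(2) have "b k \<le> sum b (N' - G)" by (intro member_le_sum) auto
      then show ?thesis
        using sum_a sum_b sum_G \<open>sum a (N - G) \<le> M\<close> \<open>w \<le> w'\<close> \<open>M' = b k\<close> by linarith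
    qed
  qed
  moreover have "M \<le> sum a N" unfolding M_def using fin(1) by (rule Max_insert_0_le_sum)
  moreover have "M' \<le> sum b N'" unfolding M'_def using fin(2) by (rule Max_insert_0_le_sum)
  ultimately show ?thesis unfolding M_def[symmetric] M'_def[symmetric] by linarith
qed

section \<open>One round of DASH\<close>

definition healing_inv :: "'a dstate \<Rightarrow> bool" where
  "healing_inv s \<longleftrightarrow> finite (sH s) \<and> (\<forall>e\<in>sH s. finite e) \<and> forest (sH s) \<and>
     (\<forall>a b. {a, b} \<in> sH s \<longrightarrow> sid s a = sid s b)"

lemma finite_T_comp: "healing_inv s \<Longrightarrow> finite (T_comp s u v)"
  unfolding T_comp_eq healing_inv_def by (blast intro: finite_induced_reachable)

lemma finite_nbrs: "healing_inv s \<Longrightarrow> finite (nbrs (sH s) v)"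
proof -
  assume "healing_inv s"
  then have "finite (\<Union>(sH s))" unfolding healing_inv_def by blast
  moreover have "nbrs (sH s) v \<subseteq> \<Union>(sH s)" unfolding nbrs_def by blast
  ultimately show ?thesis by (rule finite_subset[rotated])
qed

locale heal_step =
  fixes iid :: "'a \<Rightarrow> real" and s :: "'a dstate" and x :: 'a and s' :: "'a dstate"
    and U :: "'a set" and L :: "'a list" and r :: 'a
  assumes inv: "healing_inv s"
    and UN: "is_UN iid s x U"
    and distinct_L: "distinct L"
    and set_L: "set L = U \<union> nbrs (sH s) x"
    and recipient: "nbrs (sH s) x \<noteq> {} \<Longrightarrow> r \<in> nbrs (sH s) x"
    and sH_after: "sH s' = {e \<in> sH s. x \<notin> e} \<union> tree_edges L"
    and sid_after: "sid s' = (\<lambda>u. if \<exists>a\<in>set L. (a, u) \<in> (edge_rel (sH s'))\<^sup>*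
                                   then Min (sid s ` set L) else sid s u)"
    and sw_after: "sw s' = (if nbrs (sH s) x = {} then sw s else (sw s)(r := sw s r + sw s x))"

lemma dash_step_heal_step:
  assumes "dash_step E0 iid s x s'" "healing_inv s"
  obtains U L r where "heal_step iid s x s' U L r"
proof -
  from assms(1) obtain U L r where UN: "is_UN iid s x U" and "distinct L"
    and "set L = U \<union> nbrs (sH s) x" and "nbrs (sH s) x \<noteq> {} \<longrightarrow> r \<in> nbrs (sH s) x"
    and s': "s' = \<lparr> sV = sV s - {x},
                   sE = {e \<in> sE s. x \<notin> e} \<union> tree_edges L,
                   sH = {e \<in> sH s. x \<notin> e} \<union> tree_edges L,
                   sid = (\<lambda>u. if \<exists>a\<in>set L. (a, u) \<in> (edge_rel ({e \<in> sH s. x \<notin> e} \<union> tree_edges L))\<^sup>*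
                              then Min (sid s ` set L) else sid s u),
                   sw = (if nbrs (sH s) x = {} then sw s
                         else (sw s)(r := sw s r + sw s x)) \<rparr>"
    unfolding dash_step_def Let_def by blast
  then have "heal_step iid s x s' U L r"
    using assms(2) by unfold_locales simp_all
  then show thesis by (rule that)
qed

context heal_step
begin

lemma forest_sH: "forest (sH s)"
  using inv unfolding healing_inv_def by simp

lemma sid_reach: "(p, q) \<in> (induced_edge_rel (sH s) P)\<^sup>* \<Longrightarrow> sid s p = sid s q"
  using inv unfolding healing_inv_def by (blast intro: induced_edge_rel_rtrancl_const)

lemma sid_edge: "{a, b} \<in> sH s \<Longrightarrow> sid s a = sid s b"
  using inv unfolding healing_inv_def by blast

lemma sid_nbr: "u \<in> nbrs (sH s) x \<Longrightarrow> sid s u = sid s x"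
  by (simp add: nbrs_iff sid_edge insert_commute)

lemma sid_UN: "u \<in> U \<Longrightarrow> sid s u \<noteq> sid s x"
  using UN unfolding is_UN_def by blast

lemma UN_sid_inj:
  assumes "u \<in> U" "u' \<in> U" "sid s u = sid s u'"
  shows "u = u'"
proof -
  have "u \<in> nbrs (sE s) x" using UN assms(1) unfolding is_UN_def by blast
  then have "\<exists>!v. v \<in> U \<and> sid s v = sid s u"
    using UN sid_UN[OF assms(1)] unfolding is_UN_def by blast
  then obtain v where v: "\<forall>w. w \<in> U \<and> sid s w = sid s u \<longrightarrow> w = v" by (elim ex1E) blast
  then have "u = v" using assms(1) by blast
  moreover have "u' = v" using v assms(2,3) by simp
  ultimately show ?thesis by simp
qed

lemma set_L_mem_UN_iff: "u \<in> set L \<Longrightarrow> u \<in> U \<longleftrightarrow> sid s u \<noteq> sid s x"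
  using set_L sid_nbr sid_UN by blast

text \<open>Nodes of \<open>U\<close> carry pairwise distinct IDs that differ from the ID of the component
  of \<open>x\<close>, and two distinct healing neighbours of \<open>x\<close> are separated by \<open>x\<close> in the forest.\<close>

lemma set_L_in_distinct_components: "in_distinct_components {e \<in> sH s. x \<notin> e} (set L)"
  unfolding in_distinct_components_def edge_rel_remove_vertex
proof (intro ballI impI)
  fix p q
  assume p: "p \<in> set L" and q: "q \<in> set L"
    and pq: "(p, q) \<in> (induced_edge_rel (sH s) (\<lambda>a. a \<noteq> x))\<^sup>*"
  from pq have sid_pq: "sid s p = sid s q" by (rule sid_reach)
  show "p = q"
  proof (cases "p \<in> U \<or> q \<in> U")
    case True
    with p q sid_pq set_L_mem_UN_iff have "p \<in> U" "q \<in> U" by auto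
    from this sid_pq show ?thesis by (rule UN_sid_inj)
  next
    case False
    with p q set_L have "{x, p} \<in> sH s" "{x, q} \<in> sH s" by (auto simp: nbrs_iff)
    with forest_sH pq show ?thesis by (intro forest_nbrs_disconnected)
  qed
qed

lemma healing_inv_after: "healing_inv s'"
proof -
  let ?H0 = "{e \<in> sH s. x \<notin> e}"
  have "finite (sH s')" "\<forall>e\<in>sH s'. finite e"
    using inv finite_tree_edges[of L] tree_edges_finite_edge[of _ L]
    unfolding sH_after healing_inv_def by auto
  moreover have "forest ?H0" using forest_sH by (rule forest_subset) blast
  then have "forest (sH s')"
    unfolding sH_after using distinct_L set_L_in_distinct_components by (rule forest_Un_tree_edges)
  moreover have "sid s' a = sid s' b" if edge: "{a, b} \<in> sH s'" for a b
  proof -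
    define R where "R u \<longleftrightarrow> (\<exists>c\<in>set L. (c, u) \<in> (edge_rel (sH s'))\<^sup>*)" for u
    have "{b, a} \<in> sH s'" using edge by (simp add: insert_commute)
    with edge have "R a \<longleftrightarrow> R b"
      unfolding R_def by (blast intro: edge_rel_rtrancl_snoc)
    moreover have "sid s a = sid s b" if "\<not> R a"
    proof -
      have "a \<notin> set L" using that unfolding R_def by blast
      then have "{a, b} \<notin> tree_edges L" using tree_edges_in_set[of a b L] by blast
      with edge have "{a, b} \<in> sH s" unfolding sH_after by blast
      then show ?thesis by (rule sid_edge)
    qed
    ultimately show ?thesis unfolding sid_after R_def by auto
  qed
  ultimately show ?thesis unfolding healing_inv_def by blast
qed

lemma sw_le_after: "sw s y \<le> sw s' y"
  unfolding sw_after by auto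

lemma recipient_after: "nbrs (sH s) x \<noteq> {} \<Longrightarrow> r \<in> nbrs (sH s) x \<and> sw s' r = sw s r + sw s x"
  using recipient unfolding sw_after by simp

lemma reach_after_avoiding_x:
  assumes "(p, q) \<in> (induced_edge_rel (sH s) (\<lambda>a. P a \<and> a \<noteq> x))\<^sup>*"
  shows "(p, q) \<in> (induced_edge_rel (sH s') P)\<^sup>*"
proof -
  have "induced_edge_rel (sH s) (\<lambda>a. P a \<and> a \<noteq> x) \<subseteq> induced_edge_rel (sH s') P"
    unfolding sH_after induced_edge_rel_def by auto
  with assms show ?thesis by (rule rtrancl_mono[THEN subsetD, rotated])
qed

lemma tree_reach_after:
  assumes "v \<notin> set L" "a \<in> set L" "b \<in> set L"
  shows "(a, b) \<in> (induced_edge_rel (sH s') (\<lambda>y. y \<noteq> v))\<^sup>*"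
proof -
  have "edge_rel (tree_edges L) \<subseteq> induced_edge_rel (sH s') (\<lambda>y. y \<noteq> v)"
    using assms(1) tree_edges_in_set unfolding sH_after edge_rel_def induced_edge_rel_def by fastforce
  with tree_edges_connected[OF assms(2,3)] show ?thesis
    by (rule rtrancl_mono[THEN subsetD, rotated])
qed

lemma reach_x_via_nbr:
  assumes "(y, x) \<in> (induced_edge_rel (sH s) (\<lambda>a. a \<noteq> v))\<^sup>*" "y \<noteq> x"
  obtains z where "z \<in> nbrs (sH s) x" "z \<noteq> v" "(y, z) \<in> (induced_edge_rel (sH s') (\<lambda>a. a \<noteq> v))\<^sup>*"
proof -
  obtain z where "{z, x} \<in> sH s" "z \<noteq> v" "z \<noteq> x"
    and "(y, z) \<in> (induced_edge_rel (sH s) (\<lambda>a. a \<noteq> v \<and> a \<noteq> x))\<^sup>*"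
    using assms by (rule induced_edge_rel_last_edge)
  then show thesis
    using that reach_after_avoiding_x by (auto simp: nbrs_iff insert_commute)
qed

lemma T_comp_subset_after: "x \<notin> T_comp s u v \<Longrightarrow> T_comp s u v \<subseteq> T_comp s' u v"
proof
  fix y assume "x \<notin> T_comp s u v" "y \<in> T_comp s u v"
  then have "(u, y) \<in> (induced_edge_rel {e \<in> sH s. x \<notin> e} (\<lambda>a. a \<noteq> v))\<^sup>*"
    unfolding T_comp_eq by (intro induced_edge_rel_rtrancl_avoid) auto
  then have "(u, y) \<in> (induced_edge_rel (sH s') (\<lambda>a. a \<noteq> v))\<^sup>*"
    by (rule induced_edge_rel_rtrancl_mono) (auto simp: sH_after)
  then show "y \<in> T_comp s' u v" unfolding T_comp_eq by simp
qed

lemma nbr_after: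
  assumes "v \<noteq> x" "u \<in> nbrs (sH s) v" "x \<notin> T_comp s u v"
  shows "u \<in> nbrs (sH s') v"
proof -
  have "u \<in> T_comp s u v" unfolding T_comp_eq by simp
  with assms have "x \<notin> {v, u}" by auto
  with assms(2) show ?thesis unfolding sH_after by (simp add: nbrs_iff)
qed

lemma nbr_reaching_x_unique:
  assumes "u \<in> nbrs (sH s) v" "u' \<in> nbrs (sH s) v" "x \<in> T_comp s u v" "x \<in> T_comp s u' v"
  shows "u = u'"
proof -
  have "(u, u') \<in> (induced_edge_rel (sH s) (\<lambda>a. a \<noteq> v))\<^sup>*"
    using assms(3,4) unfolding T_comp_eq by (blast intro: rtrancl_trans induced_edge_rel_rtrancl_sym)
  with assms(1,2) forest_sH show ?thesis
    using forest_nbrs_disconnected[of "sH s" v u u'] by (simp add: nbrs_iff)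
qed

lemma tree_nbr_new:
  assumes "x \<in> nbrs (sH s) v" "{k, v} \<in> tree_edges L" "k \<noteq> v"
  shows "k \<in> nbrs (sH s') v - nbrs (sH s) v"
proof
  show "k \<in> nbrs (sH s') v"
    using assms(2,3) unfolding sH_after by (simp add: nbrs_iff insert_commute)
  show "k \<notin> nbrs (sH s) v"
  proof
    assume "k \<in> nbrs (sH s) v"
    then have vk: "{v, k} \<in> sH s" by (simp add: nbrs_iff)
    have xv: "{x, v} \<in> sH s" "v \<noteq> x" using assms(1) by (auto simp: nbrs_iff insert_commute)
    have "k \<in> set L" using tree_edges_in_set[OF assms(2)] by blast
    moreover have "sid s k = sid s x"
      using sid_edge[OF vk] sid_edge[OF xv(1)] by simp
    ultimately have "k \<in> nbrs (sH s) x" using set_L set_L_mem_UN_iff[of k] by blast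
    then have xk: "{x, k} \<in> sH s" "k \<noteq> x" by (auto simp: nbrs_iff)
    with vk xv have "(v, k) \<in> (induced_edge_rel (sH s) (\<lambda>a. a \<noteq> x))\<^sup>*"
      by (auto simp: induced_edge_rel_def)
    with forest_sH xv(1) xk(1) have "v = k" by (rule forest_nbrs_disconnected)
    with assms(3) show False by simp
  qed
qed

lemma deleted_nbr_branch_covered:
  assumes "x \<in> nbrs (sH s) v"
  shows "T_comp s x v - {x} \<subseteq> (\<Union>k \<in> nbrs (sH s') v - nbrs (sH s) v. T_comp s' k v)"
proof
  fix y assume "y \<in> T_comp s x v - {x}"
  then have "(y, x) \<in> (induced_edge_rel (sH s) (\<lambda>a. a \<noteq> v))\<^sup>*" "y \<noteq> x"
    unfolding T_comp_eq by (auto intro: induced_edge_rel_rtrancl_sym)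
  then obtain z where z: "z \<in> nbrs (sH s) x" "z \<noteq> v"
    and y_z: "(y, z) \<in> (induced_edge_rel (sH s') (\<lambda>a. a \<noteq> v))\<^sup>*"
    by (rule reach_x_via_nbr)
  have "v \<in> nbrs (sH s) x" using assms by (auto simp: nbrs_iff insert_commute)
  with z(1) set_L have "(z, v) \<in> (induced_edge_rel (tree_edges L) (\<lambda>_. True))\<^sup>*"
    using tree_edges_connected[of z L v] by (simp add: edge_rel_eq_induced_edge_rel)
  then obtain k where k: "{k, v} \<in> tree_edges L" "k \<noteq> v"
    and z_k: "(z, k) \<in> (induced_edge_rel (tree_edges L) (\<lambda>y. True \<and> y \<noteq> v))\<^sup>*"
    using z(2) by (rule induced_edge_rel_last_edge)
  from z_k have "(z, k) \<in> (induced_edge_rel (sH s') (\<lambda>a. a \<noteq> v))\<^sup>*"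
    by (rule induced_edge_rel_rtrancl_mono) (auto simp: sH_after)
  with y_z have "y \<in> T_comp s' k v"
    unfolding T_comp_eq by (blast intro: rtrancl_trans induced_edge_rel_rtrancl_sym)
  with tree_nbr_new[OF assms k] show "y \<in> (\<Union>k \<in> nbrs (sH s') v - nbrs (sH s) v. T_comp s' k v)"
    by blast
qed

text \<open>The weight of \<open>x\<close> moves either to \<open>v\<close> itself or into one of the new branches.\<close>

lemma deleted_nbr_branch_bound:
  assumes "x \<in> nbrs (sH s) v"
  shows "Wt s (T_comp s x v) + sw s v
    \<le> (\<Sum>k \<in> nbrs (sH s') v - nbrs (sH s) v. Wt s' (T_comp s' k v)) + sw s' v"
proof -
  let ?K = "nbrs (sH s') v - nbrs (sH s) v"
  let ?Y = "\<Union>k\<in>?K. T_comp s' k v"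
  have "v \<in> nbrs (sH s) x" "v \<noteq> x" using assms by (auto simp: nbrs_iff insert_commute)
  then have r: "r \<in> nbrs (sH s) x" "sw s' r = sw s r + sw s x" using recipient_after by blast+
  have "finite ?K" using finite_nbrs[OF healing_inv_after] by blast
  then have "finite ?Y" using finite_T_comp[OF healing_inv_after] by blast
  have "Wt s (T_comp s x v) = sw s x + Wt s (T_comp s x v - {x})"
    unfolding Wt_def using finite_T_comp[OF inv] by (simp add: sum.remove T_comp_eq)
  moreover have "Wt s (T_comp s x v - {x}) + (if r = v then 0 else sw s x) \<le> Wt s' ?Y"
  proof (cases "r = v")
    case True
    then show ?thesis
      using Wt_le_Wt[OF \<open>finite ?Y\<close> deleted_nbr_branch_covered[OF assms] sw_le_after] by simp
  next
    case False
    with r(1) \<open>v \<noteq> x\<close> have "r \<in> T_comp s x v - {x}"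
      unfolding T_comp_eq by (auto simp: nbrs_iff induced_edge_rel_def)
    with False show ?thesis
      using Wt_le_Wt_plus[OF \<open>finite ?Y\<close> deleted_nbr_branch_covered[OF assms] sw_le_after _ r(2)]
      by simp
  qed
  moreover have "Wt s' ?Y \<le> (\<Sum>k\<in>?K. Wt s' (T_comp s' k v))"
    unfolding Wt_def using \<open>finite ?K\<close> finite_T_comp[OF healing_inv_after] by (rule sum_UN_le)
  moreover have "sw s v + (if r = v then sw s x else 0) \<le> sw s' v"
    using r(2) sw_le_after[of v] by auto
  ultimately show ?thesis by (cases "r = v") simp_all
qed

lemma v_notin_set_L:
  assumes "u \<in> nbrs (sH s) v" "x \<in> T_comp s u v" "u \<noteq> x"
  shows "v \<notin> set L"
proof -
  have "v \<notin> nbrs (sH s) x"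
  proof
    assume "v \<in> nbrs (sH s) x"
    then have "x \<in> nbrs (sH s) v" by (auto simp: nbrs_iff insert_commute)
    moreover have "x \<in> T_comp s x v" unfolding T_comp_eq by simp
    ultimately have "u = x" using nbr_reaching_x_unique assms(1,2) by blast
    with assms(3) show False ..
  qed
  moreover have "v \<notin> U"
  proof -
    have "sid s v = sid s u" using assms(1) by (simp add: nbrs_iff sid_edge)
    also have "\<dots> = sid s x" using assms(2) unfolding T_comp_eq by (simp add: sid_reach)
    finally show ?thesis using sid_UN by auto
  qed
  ultimately show ?thesis using set_L by blast
qed

lemma branch_through_x_covered:
  assumes "u \<in> nbrs (sH s) v" "x \<in> T_comp s u v" "u \<noteq> x"
  shows "T_comp s u v - {x} \<subseteq> T_comp s' u v"
proof
  let ?R = "induced_edge_rel (sH s) (\<lambda>a. a \<noteq> v)"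
  let ?R' = "induced_edge_rel (sH s') (\<lambda>a. a \<noteq> v)"
  fix y assume y: "y \<in> T_comp s u v - {x}"
  have "(u, x) \<in> ?R\<^sup>*" using assms(2) unfolding T_comp_eq by simp
  then obtain z1 where z1: "z1 \<in> nbrs (sH s) x" "(u, z1) \<in> ?R'\<^sup>*"
    using assms(3) by (rule reach_x_via_nbr)
  from y have "(y, x) \<in> ?R\<^sup>*" "y \<noteq> x"
    using \<open>(u, x) \<in> ?R\<^sup>*\<close> unfolding T_comp_eq
    by (auto intro: rtrancl_trans induced_edge_rel_rtrancl_sym)
  then obtain z2 where z2: "z2 \<in> nbrs (sH s) x" "(y, z2) \<in> ?R'\<^sup>*"
    by (rule reach_x_via_nbr)
  have "(z1, z2) \<in> ?R'\<^sup>*"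
    using tree_reach_after v_notin_set_L[OF assms] z1(1) z2(1) set_L by blast
  with z1(2) z2(2) show "y \<in> T_comp s' u v"
    unfolding T_comp_eq by (blast intro: rtrancl_trans induced_edge_rel_rtrancl_sym)
qed

lemma branch_through_x_bound:
  assumes "u \<in> nbrs (sH s) v" "x \<in> T_comp s u v" "u \<noteq> x"
  shows "Wt s (T_comp s u v) \<le> Wt s' (T_comp s' u v)"
proof -
  have "(u, x) \<in> (induced_edge_rel (sH s) (\<lambda>a. a \<noteq> v))\<^sup>*" using assms(2) unfolding T_comp_eq by simp
  then obtain z where "z \<in> nbrs (sH s) x"
    using assms(3) by (rule reach_x_via_nbr)
  then have r: "r \<in> nbrs (sH s) x" "sw s' r = sw s r + sw s x" using recipient_after by blast+
  with v_notin_set_L[OF assms] set_L have "r \<noteq> v" "r \<noteq> x" by (auto simp: nbrs_iff)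
  have "x \<noteq> v"
    using induced_edge_rel_rtrancl_target[OF \<open>(u, x) \<in> _\<close>] assms(1,3) by (auto simp: nbrs_iff)
  with r(1) \<open>r \<noteq> v\<close> have "(x, r) \<in> induced_edge_rel (sH s) (\<lambda>a. a \<noteq> v)"
    by (auto simp: nbrs_iff induced_edge_rel_def)
  with assms(2) \<open>r \<noteq> x\<close> have "r \<in> T_comp s u v - {x}" unfolding T_comp_eq by auto
  have "Wt s (T_comp s u v) = Wt s (T_comp s u v - {x}) + sw s x"
    unfolding Wt_def using finite_T_comp[OF inv] assms(2) by (simp add: sum.remove)
  also have "\<dots> \<le> Wt s' (T_comp s' u v)"
    using Wt_le_Wt_plus[OF finite_T_comp[OF healing_inv_after] branch_through_x_covered[OF assms]
        sw_le_after \<open>r \<in> T_comp s u v - {x}\<close> r(2)] .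
  finally show ?thesis .
qed

lemma affected_branch_bound:
  assumes "v \<noteq> x"
  defines "G \<equiv> {u \<in> nbrs (sH s) v. x \<notin> T_comp s u v}"
  shows "(\<Sum>u \<in> nbrs (sH s) v - G. Wt s (T_comp s u v)) + sw s v
    \<le> (\<Sum>u \<in> nbrs (sH s') v - G. Wt s' (T_comp s' u v)) + sw s' v"
proof (cases "nbrs (sH s) v - G = {}")
  case True
  then show ?thesis using sw_le_after[of v] by (simp only: True sum.empty)
next
  case False
  then obtain u where u: "u \<in> nbrs (sH s) v" "x \<in> T_comp s u v" unfolding G_def by blast
  then have "nbrs (sH s) v - G = {u}"
    unfolding G_def using nbr_reaching_x_unique by blast
  moreover have fin: "finite (nbrs (sH s') v - G)" using finite_nbrs[OF healing_inv_after] by blast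
  moreover have "Wt s (T_comp s u v) + sw s v
    \<le> (\<Sum>u \<in> nbrs (sH s') v - G. Wt s' (T_comp s' u v)) + sw s' v"
  proof (cases "u = x")
    case True
    have "nbrs (sH s') v - nbrs (sH s) v \<subseteq> nbrs (sH s') v - G" unfolding G_def by blast
    with fin have "(\<Sum>k \<in> nbrs (sH s') v - nbrs (sH s) v. Wt s' (T_comp s' k v))
      \<le> (\<Sum>u \<in> nbrs (sH s') v - G. Wt s' (T_comp s' u v))" by (rule sum_mono2) simp
    with deleted_nbr_branch_bound u(1) True show ?thesis by fastforce
  next
    case False
    with u(1) assms(1) have "u \<in> nbrs (sH s') v" unfolding sH_after by (auto simp: nbrs_iff)
    with u(2) have "u \<in> nbrs (sH s') v - G" unfolding G_def by blast
    with fin have "Wt s' (T_comp s' u v) \<le> (\<Sum>u \<in> nbrs (sH s') v - G. Wt s' (T_comp s' u v))"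
      by (intro member_le_sum) auto
    with branch_through_x_bound[OF u False] sw_le_after[of v] show ?thesis by linarith
  qed
  ultimately show ?thesis by simp
qed

theorem rem_mono:
  assumes "v \<noteq> x"
  shows "rem s v \<le> rem s' v"
proof -
  define G where "G = {u \<in> nbrs (sH s) v. x \<notin> T_comp s u v}"
  have "G \<subseteq> nbrs (sH s) v" unfolding G_def by blast
  moreover have "G \<subseteq> nbrs (sH s') v" unfolding G_def using nbr_after[OF assms] by blast
  moreover have "Wt s (T_comp s u v) \<le> Wt s' (T_comp s' u v)" if "u \<in> G" for u
  proof (rule Wt_le_Wt)
    show "T_comp s u v \<subseteq> T_comp s' u v"
      using that T_comp_subset_after unfolding G_def by blast
  qed (simp_all add: finite_T_comp[OF healing_inv_after] sw_le_after)
  moreover have "sw s v \<le> sw s' v" by (rule sw_le_after)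
  moreover have "u = u'" if "u \<in> nbrs (sH s) v - G" "u' \<in> nbrs (sH s) v - G" for u u'
    using that nbr_reaching_x_unique unfolding G_def by blast
  moreover have "(\<Sum>u \<in> nbrs (sH s) v - G. Wt s (T_comp s u v)) + sw s v
    \<le> (\<Sum>u \<in> nbrs (sH s') v - G. Wt s' (T_comp s' u v)) + sw s' v"
    unfolding G_def by (rule affected_branch_bound[OF assms])
  ultimately show ?thesis
    unfolding rem_def
    by (rule sum_minus_Max_mono[OF finite_nbrs[OF inv] finite_nbrs[OF healing_inv_after]])
qed

end

lemma healing_inv_init: "healing_inv (init_state V0 E0 iid)"
  by (simp add: healing_inv_def init_state_def forest_def)

lemma healing_inv_reachable:
  assumes "(dash_round E0 iid)\<^sup>*\<^sup>* (init_state V0 E0 iid) s"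
  shows "healing_inv s"
  using assms
proof (induction rule: rtranclp_induct)
  case (step s s')
  then obtain x where "dash_step E0 iid s x s'" unfolding dash_round_def by blast
  then obtain U L r where "heal_step iid s x s' U L r"
    using step.IH by (rule dash_step_heal_step)
  then show ?case by (rule heal_step.healing_inv_after)
qed (rule healing_inv_init)

theorem lemma2:
  fixes V0 :: "'a set" and E0 :: "'a set set" and iid :: "'a \<Rightarrow> real"
    and s s' :: "'a dstate" and x v :: 'a
  assumes "finite V0"
    and "simple_graph V0 E0"
    and "connected_graph V0 E0"
    and "\<forall>u\<in>V0. 0 \<le> iid u \<and> iid u \<le> 1"
    and "(dash_round E0 iid)\<^sup>*\<^sup>* (init_state V0 E0 iid) s"
    and "dash_step E0 iid s x s'"
    and "v \<in> sV s" and "v \<noteq> x"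
  shows "rem s v \<le> rem s' v"
proof -
  from assms(5) have "healing_inv s" by (rule healing_inv_reachable)
  with assms(6) obtain U L r where "heal_step iid s x s' U L r" by (rule dash_step_heal_step)
  then show ?thesis using assms(8) by (rule heal_step.rem_mono)
qed

end
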